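(* Let $T = V/\Lambda$ be a compact torus of real dimension $n$ with a flat metric, where $V$ is an $n$-dimensional real vector space with an inner product and $\Lambda\le V$ a lattice of rank $n$, and let $T^{\mathbb{C}} = V^{\mathbb{C}}/\Lambda$ with $V^{\mathbb{C}} = V\otimes_{\mathbb{R}}\mathbb{C}$, containing $T$ via $V\hookrightarrow V^{\mathbb{C}}$. Suppose a finite group $\Gamma$ acts freely on $T$ by isometries. Then there exists a unique holomorphic $\Gamma$-action on $T^{\mathbb{C}}$ for which the inclusion $T\hookrightarrow T^{\mathbb{C}}$ is $\Gamma$-equivariant. Furthermore, this action is algebraic with respect to the algebraic structure on $T^{\mathbb{C}}$ induced by the biholomorphism $T^{\mathbb{C}}\to(\mathbb{C}^\times)^n$, $\sum_\alpha u_\alpha\lambda_\alpha + \Lambda\mapsto(e^{2\pi i u_1},\dots,e^{2\pi i u_n})$, for a $\mathbb{Z}$-basis $\lambda_1,\dots,\lambda_n$ of $\Lambda$. *)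

theory Defs
  imports "HOL-Analysis.Analysis" "HOL-Algebra.Group"
begin

text \<open>Flat torus T = V / Lambda with V = real^'n (standard inner product), and
  Lambda the lattice with Z-basis b.  Its complexification is complex^'n / Lambda.
  Points of the quotients are represented by points of the covering spaces; maps
  of the quotients by maps of the covering spaces respecting the equivalence.\<close>

definition lattice_basis :: "('n::finite \<Rightarrow> real^'n) \<Rightarrow> bool" where
  "lattice_basis b \<longleftrightarrow> (\<forall>c. (\<Sum>i\<in>UNIV. c i *\<^sub>R b i) = 0 \<longrightarrow> (\<forall>i. c i = 0))"

definition lattice :: "('n::finite \<Rightarrow> real^'n) \<Rightarrow> (real^'n) set" where
  "lattice b = {(\<Sum>i\<in>UNIV. of_int (k i) *\<^sub>R b i) | k. True}"

definition embC :: "real^'n \<Rightarrow> complex^'n" where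
  "embC x = (\<chi> j. complex_of_real (x $ j))"

definition clattice :: "('n::finite \<Rightarrow> real^'n) \<Rightarrow> (complex^'n) set" where
  "clattice b = embC ` lattice b"

definition lat_eq :: "('n::finite \<Rightarrow> real^'n) \<Rightarrow> real^'n \<Rightarrow> real^'n \<Rightarrow> bool" where
  "lat_eq b x y \<longleftrightarrow> x - y \<in> lattice b"

definition clat_eq :: "('n::finite \<Rightarrow> real^'n) \<Rightarrow> complex^'n \<Rightarrow> complex^'n \<Rightarrow> bool" where
  "clat_eq b z w \<longleftrightarrow> z - w \<in> clattice b"

definition tdist :: "('n::finite \<Rightarrow> real^'n) \<Rightarrow> real^'n \<Rightarrow> real^'n \<Rightarrow> real" where
  "tdist b x y = Inf ((\<lambda>l. norm (x - y - l)) ` lattice b)"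

definition quot_action :: "('x \<Rightarrow> 'x \<Rightarrow> bool) \<Rightarrow> ('g, 'z) monoid_scheme \<Rightarrow> ('g \<Rightarrow> 'x \<Rightarrow> 'x) \<Rightarrow> bool" where
  "quot_action R G \<phi> \<longleftrightarrow>
     (\<forall>g\<in>carrier G. \<forall>x y. R x y \<longrightarrow> R (\<phi> g x) (\<phi> g y)) \<and>
     (\<forall>x. R (\<phi> \<one>\<^bsub>G\<^esub> x) x) \<and>
     (\<forall>g\<in>carrier G. \<forall>h\<in>carrier G. \<forall>x. R (\<phi> (g \<otimes>\<^bsub>G\<^esub> h) x) (\<phi> g (\<phi> h x)))"

definition free_quot_action :: "('x \<Rightarrow> 'x \<Rightarrow> bool) \<Rightarrow> ('g, 'z) monoid_scheme \<Rightarrow> ('g \<Rightarrow> 'x \<Rightarrow> 'x) \<Rightarrow> bool" where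
  "free_quot_action R G \<phi> \<longleftrightarrow> (\<forall>g\<in>carrier G. g \<noteq> \<one>\<^bsub>G\<^esub> \<longrightarrow> (\<forall>x. \<not> R (\<phi> g x) x))"

definition torus_isometry :: "('n::finite \<Rightarrow> real^'n) \<Rightarrow> (real^'n \<Rightarrow> real^'n) \<Rightarrow> bool" where
  "torus_isometry b f \<longleftrightarrow> (\<forall>x y. tdist b (f x) (f y) = tdist b x y)"

definition cvec_holomorphic_on :: "(complex^'n \<Rightarrow> complex^'m) \<Rightarrow> (complex^'n) set \<Rightarrow> bool" where
  "cvec_holomorphic_on f S \<longleftrightarrow> open S \<and>
     (\<forall>z\<in>S. \<exists>L. (f has_derivative L) (at z) \<and>
        (\<forall>c v. L (\<chi> j. c * v $ j) = (\<chi> j. c * L v $ j)))"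

definition ctorus_holomorphic :: "('n::finite \<Rightarrow> real^'n) \<Rightarrow> (complex^'n \<Rightarrow> complex^'n) \<Rightarrow> bool" where
  "ctorus_holomorphic b f \<longleftrightarrow>
     (\<forall>z. \<exists>e>0. \<exists>h. cvec_holomorphic_on h (ball z e) \<and> (\<forall>w\<in>ball z e. clat_eq b (h w) (f w)))"

definition ctorus_holo_action :: "('n::finite \<Rightarrow> real^'n) \<Rightarrow> ('g, 'z) monoid_scheme \<Rightarrow> ('g \<Rightarrow> complex^'n \<Rightarrow> complex^'n) \<Rightarrow> bool" where
  "ctorus_holo_action b G \<psi> \<longleftrightarrow> quot_action (clat_eq b) G \<psi> \<and> (\<forall>g\<in>carrier G. ctorus_holomorphic b (\<psi> g))"

definition equivariant_incl :: "('n::finite \<Rightarrow> real^'n) \<Rightarrow> ('g, 'z) monoid_scheme \<Rightarrow> ('g \<Rightarrow> real^'n \<Rightarrow> real^'n) \<Rightarrow> ('g \<Rightarrow> complex^'n \<Rightarrow> complex^'n) \<Rightarrow> bool" where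
  "equivariant_incl b G \<phi> \<psi> \<longleftrightarrow> (\<forall>g\<in>carrier G. \<forall>x. clat_eq b (\<psi> g (embC x)) (embC (\<phi> g x)))"

definition ccomb :: "('n::finite \<Rightarrow> real^'n) \<Rightarrow> ('n \<Rightarrow> complex) \<Rightarrow> complex^'n" where
  "ccomb b u = (\<chi> j. \<Sum>i\<in>UNIV. u i * complex_of_real (b i $ j))"

definition ccoords :: "('n::finite \<Rightarrow> real^'n) \<Rightarrow> complex^'n \<Rightarrow> ('n \<Rightarrow> complex)" where
  "ccoords b z = (THE u. ccomb b u = z)"

definition expmap :: "('n::finite \<Rightarrow> real^'n) \<Rightarrow> complex^'n \<Rightarrow> complex^'n" where
  "expmap b z = (\<chi> i. exp (2 * of_real pi * \<i> * ccoords b z i))"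

text \<open>Laurent polynomials in n variables (regular functions on (C^*)^n):
  finite set of exponent vectors K and coefficients c.\<close>
definition laurent_eval :: "('n::finite \<Rightarrow> int) set \<Rightarrow> (('n \<Rightarrow> int) \<Rightarrow> complex) \<Rightarrow> complex^'n \<Rightarrow> complex" where
  "laurent_eval K c w = (\<Sum>k\<in>K. c k * (\<Prod>i\<in>UNIV. (w $ i) powi (k i)))"

text \<open>A map of T^C is algebraic (a morphism of the variety (C^*)^n, transported
  via expmap) iff in the exponential coordinates each component is a Laurent polynomial.\<close>
definition ctorus_algebraic :: "('n::finite \<Rightarrow> real^'n) \<Rightarrow> (complex^'n \<Rightarrow> complex^'n) \<Rightarrow> bool" where
  "ctorus_algebraic b f \<longleftrightarrow>
     (\<exists>K c. (\<forall>j. finite (K j)) \<and>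
        (\<forall>z j. expmap b (f z) $ j = laurent_eval (K j) (c j) (expmap b z)))"

end

theory Submission
  imports Defs "HOL-Complex_Analysis.Complex_Analysis"
begin

(*
  Short local lifts of a flat-torus isometry preserve distances on a small ball, hence are
  restrictions of linear maps, and by discreteness of the lattice they do not depend on the base
  point; so each isometry is induced by an affine map A x + c of V with A mapping the lattice into
  itself.  A linear map with values in a discrete lattice is zero, so A is unique and c is unique
  modulo the lattice; hence these affine maps compose like the action, and their complexifications
  A z + c form a holomorphic action extending it.  The matrix of A in a lattice basis is integral,
  so in exponential coordinates every component of the extension is a monomial.

  For uniqueness, the difference of two holomorphic extensions is holomorphic modulo the countable
  lattice and lies in it on T.  Restricted to the complex line X + t Y through a real point, the
  identity theorem spreads this from the real axis to all parameters t, in particular to t = i.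
*)

section \<open>The lattice\<close>

definition rcomb :: "('n::finite \<Rightarrow> real^'n) \<Rightarrow> ('n \<Rightarrow> real) \<Rightarrow> real^'n" where
  "rcomb b c = (\<Sum>i\<in>UNIV. c i *\<^sub>R b i)"

lemma mem_lattice_iff: "x \<in> lattice b \<longleftrightarrow> (\<exists>k. x = rcomb b (\<lambda>i. of_int (k i)))"
  unfolding lattice_def rcomb_def by blast

lemma rcomb_add: "rcomb b c + rcomb b d = rcomb b (\<lambda>i. c i + d i)"
  by (simp add: rcomb_def scaleR_add_left sum.distrib)

lemma rcomb_uminus: "- rcomb b c = rcomb b (\<lambda>i. - c i)"
  by (simp add: rcomb_def sum_negf)

lemma zero_in_lattice: "0 \<in> lattice b"
  unfolding mem_lattice_iff rcomb_def by (auto intro!: exI[of _ "\<lambda>_. 0"])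

lemma lattice_add:
  assumes "x \<in> lattice b" "y \<in> lattice b"
  shows "x + y \<in> lattice b"
proof -
  obtain k k' where "x = rcomb b (\<lambda>i. of_int (k i))" "y = rcomb b (\<lambda>i. of_int (k' i))"
    using assms unfolding mem_lattice_iff by blast
  then have "x + y = rcomb b (\<lambda>i. of_int (k i + k' i))"
    by (simp add: rcomb_add)
  then show ?thesis unfolding mem_lattice_iff by (rule exI[of _ "\<lambda>i. k i + k' i"])
qed

lemma lattice_uminus:
  assumes "x \<in> lattice b"
  shows "- x \<in> lattice b"
proof -
  obtain k where "x = rcomb b (\<lambda>i. of_int (k i))"
    using assms unfolding mem_lattice_iff by blast
  then have "- x = rcomb b (\<lambda>i. of_int (- k i))"
    by (simp add: rcomb_uminus)
  then show ?thesis unfolding mem_lattice_iff by (rule exI[of _ "\<lambda>i. - k i"])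
qed

lemma lattice_diff: "x \<in> lattice b \<Longrightarrow> y \<in> lattice b \<Longrightarrow> x - y \<in> lattice b"
  using lattice_add[of x b "- y"] lattice_uminus[of y b] by simp

lemma lat_eq_refl: "lat_eq b x x"
  by (simp add: lat_eq_def zero_in_lattice)

lemma basis_in_lattice: "b i \<in> lattice b"
proof -
  have "rcomb b (\<lambda>l. of_int (if l = i then 1 else 0)) = (\<Sum>l\<in>UNIV. if l = i then b l else 0)"
    unfolding rcomb_def by (rule sum.cong) auto
  then show ?thesis
    unfolding mem_lattice_iff by (intro exI[of _ "\<lambda>l. if l = i then 1 else 0"]) simp
qed

lemma countable_lattice: "countable (lattice b)"
proof -
  have "lattice b = range (\<lambda>k. rcomb b (\<lambda>i. of_int (k i)))"
    unfolding lattice_def rcomb_def by auto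
  then show ?thesis by simp
qed

lemma linear_rcomb_vec: "linear (\<lambda>v. rcomb b (\<lambda>i. v $ i))"
  by (rule linearI) (auto simp: rcomb_def scaleR_add_left sum.distrib scaleR_sum_right)

lemma rcomb_vec_eq_0:
  assumes "lattice_basis b" "rcomb b (\<lambda>i. v $ i) = 0"
  shows "v = 0"
  using assms unfolding lattice_basis_def rcomb_def by (auto simp: vec_eq_iff)

lemma rcomb_inj:
  assumes "lattice_basis b" "rcomb b c = rcomb b d"
  shows "c = d"
proof -
  have "rcomb b (\<lambda>i. c i - d i) = 0"
    using assms(2) by (simp add: rcomb_def scaleR_diff_left sum_subtractf)
  then show ?thesis
    using assms(1) unfolding lattice_basis_def rcomb_def by (auto simp: fun_eq_iff)
qed

lemma rcomb_surj:
  assumes "lattice_basis b"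
  obtains c where "rcomb b c = x"
proof -
  have "inj (\<lambda>v. rcomb b (\<lambda>i. v $ i))"
    using rcomb_vec_eq_0[OF assms] by (auto simp: linear_injective_0[OF linear_rcomb_vec])
  then have "surj (\<lambda>v. rcomb b (\<lambda>i. v $ i))"
    using linear_injective_imp_surjective[OF linear_rcomb_vec] by simp
  then show ?thesis using that by (metis surjD)
qed

lemma lattice_discrete:
  fixes b :: "'n::finite \<Rightarrow> real^'n"
  assumes "lattice_basis b"
  obtains D where "D > 0" "\<forall>l\<in>lattice b. l \<noteq> 0 \<longrightarrow> D \<le> norm l"
proof -
  obtain e where e: "e > 0" "\<And>v. e * norm v \<le> norm (rcomb b (\<lambda>i. v $ i))"
    using injective_imp_isometric[OF closed_UNIV subspace_UNIV
        linear_rcomb_vec[THEN linear_conv_bounded_linear[THEN iffD1]]]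
      rcomb_vec_eq_0[OF assms] by blast
  have "e \<le> norm l" if "l \<in> lattice b" "l \<noteq> 0" for l
  proof -
    obtain k where k: "l = rcomb b (\<lambda>i. of_int (k i))"
      using \<open>l \<in> lattice b\<close> unfolding mem_lattice_iff by blast
    define v :: "real^'n" where "v = (\<chi> i. of_int (k i))"
    obtain i where "k i \<noteq> 0"
      using \<open>l \<noteq> 0\<close> k by (force simp: rcomb_def)
    then have "1 \<le> \<bar>v $ i\<bar>" by (simp add: v_def)
    also have "\<dots> \<le> norm v" by (rule component_le_norm_cart)
    finally have "e \<le> e * norm v" using e(1) by simp
    also have "\<dots> \<le> norm l" using e(2)[of v] by (simp add: k v_def)
    finally show ?thesis .
  qed
  with e(1) that show ?thesis by blast
qed

lemma linear_plus_const_in_lattice: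
  assumes "lattice_basis b" and F: "linear F" and in_lattice: "\<And>x. F x + d \<in> lattice b"
  shows "F = (\<lambda>x. 0)" "d \<in> lattice b"
proof -
  show d: "d \<in> lattice b" using in_lattice[of 0] linear_0[OF F] by simp
  obtain D where "D > 0" and disc: "\<forall>l\<in>lattice b. l \<noteq> 0 \<longrightarrow> D \<le> norm l"
    using lattice_discrete[OF assms(1)] by blast
  have "F x = 0" for x
  proof (rule ccontr)
    assume "F x \<noteq> 0"
    define t where "t = D / (2 * norm (F x))"
    have "F (t *\<^sub>R x) \<in> lattice b"
      using lattice_diff[OF in_lattice d] by simp
    moreover have "norm (F (t *\<^sub>R x)) = D / 2"
      using \<open>F x \<noteq> 0\<close> \<open>D > 0\<close> by (simp add: linear_scale[OF F] t_def)
    ultimately show False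
      using disc[rule_format, of "F (t *\<^sub>R x)"] \<open>D > 0\<close> by auto
  qed
  then show "F = (\<lambda>x. 0)" by blast
qed

section \<open>The flat distance\<close>

lemma tdist_eq_norm:
  assumes disc: "\<forall>l\<in>lattice b. l \<noteq> 0 \<longrightarrow> D \<le> norm l"
    and l0: "l0 \<in> lattice b" and short: "norm (x - y - l0) < D / 2"
  shows "tdist b x y = norm (x - y - l0)"
  unfolding tdist_def
proof (rule cInf_eq_minimum)
  show "norm (x - y - l0) \<in> (\<lambda>l. norm (x - y - l)) ` lattice b"
    using l0 by blast
next
  fix d assume "d \<in> (\<lambda>l. norm (x - y - l)) ` lattice b"
  then obtain l where l: "l \<in> lattice b" "d = norm (x - y - l)" by blast
  show "norm (x - y - l0) \<le> d"
  proof (cases "l = l0")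
    case False
    then have "D \<le> norm (l - l0)"
      using disc lattice_diff[OF l(1) l0] by auto
    also have "\<dots> \<le> norm (x - y - l0) + norm (x - y - l)"
      using norm_triangle_ineq4[of "x - y - l0" "x - y - l"] by simp
    finally show ?thesis using short l(2) by linarith
  qed (use l in simp)
qed

lemma tdist_lessE:
  assumes "tdist b x y < e"
  obtains l where "l \<in> lattice b" "norm (x - y - l) < e"
proof -
  let ?N = "(\<lambda>l. norm (x - y - l)) ` lattice b"
  have "?N \<noteq> {}" using zero_in_lattice by blast
  moreover have "bdd_below ?N" by (rule bdd_belowI[of _ 0]) auto
  ultimately have "\<exists>d\<in>?N. d < e"
    using assms cInf_less_iff[of ?N e] unfolding tdist_def by simp
  with that show ?thesis by blast
qed

lemma tdist_eq_0_iff: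
  assumes disc: "\<forall>l\<in>lattice b. l \<noteq> 0 \<longrightarrow> D \<le> norm l" and "D > 0"
  shows "tdist b x y = 0 \<longleftrightarrow> x - y \<in> lattice b"
proof
  assume "tdist b x y = 0"
  with \<open>D > 0\<close> have "tdist b x y < D / 2" by simp
  then obtain l where l: "l \<in> lattice b" "norm (x - y - l) < D / 2"
    by (rule tdist_lessE)
  then have "norm (x - y - l) = 0"
    using tdist_eq_norm[OF disc] \<open>tdist b x y = 0\<close> by simp
  with l(1) show "x - y \<in> lattice b" by simp
next
  assume "x - y \<in> lattice b"
  then show "tdist b x y = 0"
    using tdist_eq_norm[OF disc, of "x - y"] \<open>D > 0\<close> by simp
qed

lemma short_representative_unique:
  assumes disc: "\<forall>l\<in>lattice b. l \<noteq> 0 \<longrightarrow> D \<le> norm l"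
    and "p - w \<in> lattice b" "p - w' \<in> lattice b" "norm w + norm w' < D"
  shows "w = w'"
proof (rule ccontr)
  assume "w \<noteq> w'"
  moreover have "w' - w \<in> lattice b"
    using lattice_diff[OF assms(2,3)] by simp
  ultimately have "D \<le> norm (w' - w)" using disc by auto
  also have "\<dots> \<le> norm w' + norm w" by (rule norm_triangle_ineq4)
  finally show False using assms(4) by linarith
qed

section \<open>Isometries of the torus are affine\<close>

lemma isometry_on_ball_preserves_inner:
  fixes L :: "'a::real_inner \<Rightarrow> 'b::real_inner"
  assumes "L 0 = 0"
    and isometric: "\<And>u v. norm u < r \<Longrightarrow> norm v < r \<Longrightarrow> dist (L u) (L v) = dist u v"
    and "norm u < r" "norm v < r"
  shows "inner (L u) (L v) = inner u v"
proof -
  have "r > 0" using assms(3) norm_ge_zero[of u] by linarith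
  then have "norm (L u) = norm u" "norm (L v) = norm v"
    using isometric[of u 0] isometric[of v 0] assms by auto
  moreover have "norm (L u - L v) = norm (u - v)"
    using isometric[OF assms(3,4)] by (simp add: dist_norm)
  ultimately show ?thesis by (simp add: dot_norm_neg)
qed

text \<open>A distance-preserving map on a ball that fixes 0 sends the scaled standard basis to an
  orthonormal family, and Parseval's identity forces it to agree with the linear map sending the
  standard basis to that family.\<close>
lemma isometry_on_ball_extends_linear:
  fixes L :: "'a::euclidean_space \<Rightarrow> 'b::real_inner"
  assumes "r > 0" "L 0 = 0"
    and isometric: "\<And>u v. norm u < r \<Longrightarrow> norm v < r \<Longrightarrow> dist (L u) (L v) = dist u v"
  obtains A where "linear A" "\<And>v. norm v < r \<Longrightarrow> A v = L v"
proof -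
  have inner_L: "inner (L u) (L v) = inner u v" if "norm u < r" "norm v < r" for u v
    using assms(2) isometric that by (rule isometry_on_ball_preserves_inner)
  define s where "s = r / 2"
  have s: "s > 0" "norm (s *\<^sub>R c) < r" if "c \<in> Basis" for c
    using that assms(1) by (auto simp: s_def)
  define e where "e c = L (s *\<^sub>R c) /\<^sub>R s" for c
  have inner_e: "inner (L u) (e c) = inner u c" if "norm u < r" "c \<in> Basis" for u c
    using inner_L[OF that(1) s(2)[OF that(2)]] s(1)[OF that(2)] by (simp add: e_def)
  have orthonormal: "inner (e c) (e c') = inner c c'" if "c \<in> Basis" "c' \<in> Basis" for c c'
    using inner_e[OF s(2)[OF that(1)] that(2)] s(1)[OF that(1)] by (simp add: e_def)
  define A where "A x = (\<Sum>c\<in>Basis. inner x c *\<^sub>R e c)" for x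
  have "linear A"
    by (rule linearI)
      (simp_all add: A_def inner_add_left scaleR_add_left sum.distrib scaleR_sum_right)
  have inner_A: "inner (A x) (e c) = inner x c" if "c \<in> Basis" for x c
  proof -
    have "inner (A x) (e c) = (\<Sum>c'\<in>Basis. if c' = c then inner x c' else 0)"
      unfolding A_def inner_sum_left using orthonormal that by (intro sum.cong) (auto simp: inner_Basis)
    also have "\<dots> = inner x c" using that by simp
    finally show ?thesis .
  qed
  have "A v = L v" if "norm v < r" for v
  proof -
    have LA: "inner (L v) (A v) = inner v v"
      unfolding euclidean_inner[of v v] by (simp add: A_def inner_sum_right inner_e[OF that])
    have AA: "inner (A v) (A v) = inner v v"
      unfolding euclidean_inner[of v v] by (subst (2) A_def) (simp add: inner_sum_right inner_A)
    have "norm (L v - A v) ^ 2 = inner (L v) (L v) - 2 * inner (L v) (A v) + inner (A v) (A v)"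
      by (simp add: power2_norm_eq_inner inner_diff_left inner_diff_right inner_commute)
    also have "\<dots> = 0" using LA AA inner_L[OF that that] by simp
    finally show ?thesis by simp
  qed
  with \<open>linear A\<close> that show ?thesis by blast
qed

lemma locally_related_imp_related:
  fixes R :: "'a::real_normed_vector \<Rightarrow> 'a \<Rightarrow> bool"
  assumes sym: "\<And>x y. R x y \<Longrightarrow> R y x" and trans: "\<And>x y z. R x y \<Longrightarrow> R y z \<Longrightarrow> R x z"
    and local: "\<And>x. \<exists>e>0. \<forall>y. dist x y < e \<longrightarrow> R x y"
  shows "R x y"
proof (rule connected_equivalence_relation[OF connected_UNIV])
  fix a
  obtain e where "e > 0" "\<forall>y. dist a y < e \<longrightarrow> R a y" using local by blast
  then show "\<exists>T. openin (top_of_set UNIV) T \<and> a \<in> T \<and> (\<forall>x\<in>T. R a x)"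
    by (intro exI[of _ "ball a e"]) auto
next
  fix x y assume "R x y"
  then show "R y x" by (rule sym)
next
  fix x y z assume "R x y" "R y z"
  then show "R x z" by (rule trans)
qed auto

lemma torus_isometry_short_lift:
  assumes disc: "\<forall>l\<in>lattice b. l \<noteq> 0 \<longrightarrow> D \<le> norm l"
    and iso: "torus_isometry b f" and v: "norm v < D / 2"
  shows "\<exists>w. f (x + v) - f x - w \<in> lattice b \<and> norm w = norm v"
proof -
  have "tdist b (f (x + v)) (f x) = norm v"
    using iso tdist_eq_norm[OF disc zero_in_lattice, of "x + v" x] v
    unfolding torus_isometry_def by simp
  with v have "tdist b (f (x + v)) (f x) < D / 2" by simp
  then obtain l where l: "l \<in> lattice b" "norm (f (x + v) - f x - l) < D / 2"
    by (rule tdist_lessE)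
  then have "norm (f (x + v) - f x - l) = norm v"
    using tdist_eq_norm[OF disc] \<open>tdist b (f (x + v)) (f x) = norm v\<close> by simp
  with l(1) show ?thesis
    by (intro exI[of _ "f (x + v) - f x - l"]) simp
qed

lemma short_lifts_isometric:
  assumes disc: "\<forall>l\<in>lattice b. l \<noteq> 0 \<longrightarrow> D \<le> norm l" and iso: "torus_isometry b f"
    and w: "f (x + u) - f x - w \<in> lattice b" "norm w = norm u"
    and w': "f (x + v) - f x - w' \<in> lattice b" "norm w' = norm v"
    and short: "norm u < D / 4" "norm v < D / 4"
  shows "dist w w' = dist u v"
proof -
  have "(f (x + u) - f (x + v)) - (w - w') \<in> lattice b"
    using lattice_diff[OF w(1) w'(1)] by (simp add: algebra_simps)
  moreover have "norm (w - w') < D / 2"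
    using norm_triangle_ineq4[of w w'] w(2) w'(2) short by simp
  ultimately have "tdist b (f (x + u)) (f (x + v)) = norm (w - w')"
    using tdist_eq_norm[OF disc] by fastforce
  moreover have "tdist b (x + u) (x + v) = norm (u - v)"
    using tdist_eq_norm[OF disc zero_in_lattice, of "x + u" "x + v"]
      norm_triangle_ineq4[of u v] short by simp
  ultimately show ?thesis
    using iso unfolding torus_isometry_def by (simp add: dist_norm)
qed

lemma short_lift_locally_linear:
  assumes disc: "\<forall>l\<in>lattice b. l \<noteq> 0 \<longrightarrow> D \<le> norm l" and "D > 0"
    and iso: "torus_isometry b f"
    and L: "\<And>x v. norm v < D / 2 \<Longrightarrow> f (x + v) - f x - L x v \<in> lattice b \<and> norm (L x v) = norm v"
  obtains A where "linear A" "\<And>v. norm v < D / 4 \<Longrightarrow> A v = L x v"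
proof -
  have "dist (L x u) (L x v) = dist u v" if "norm u < D / 4" "norm v < D / 4" for u v
  proof -
    have "norm u < D / 2" "norm v < D / 2"
      using that norm_ge_zero[of u] norm_ge_zero[of v] by linarith+
    from this[THEN L, of x] show ?thesis
      using short_lifts_isometric[OF disc iso _ _ _ _ that] by blast
  qed
  moreover have "L x 0 = 0" using L[of 0 x] \<open>D > 0\<close> by simp
  moreover have "D / 4 > 0" using \<open>D > 0\<close> by simp
  ultimately show ?thesis
    using isometry_on_ball_extends_linear[of "D / 4" "L x"] that by blast
qed

text \<open>Lifts from nearby base points differ by short lattice vectors, hence agree.\<close>
lemma short_lift_base_independent:
  assumes disc: "\<forall>l\<in>lattice b. l \<noteq> 0 \<longrightarrow> D \<le> norm l" and "D > 0"
    and iso: "torus_isometry b f"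
    and L: "\<And>x v. norm v < D / 2 \<Longrightarrow> f (x + v) - f x - L x v \<in> lattice b \<and> norm (L x v) = norm v"
    and "norm v < D / 8"
  shows "L x v = L y v"
proof -
  have L_add: "L x (u + v) = L x u + L x v" if "norm u < D / 8" "norm v < D / 8" for x u v
  proof -
    obtain A where "linear A" "\<And>v. norm v < D / 4 \<Longrightarrow> A v = L x v"
      using short_lift_locally_linear[OF disc \<open>D > 0\<close> iso L] by blast
    moreover have "norm u < D / 4" "norm v < D / 4" "norm (u + v) < D / 4"
      using that norm_triangle_ineq[of u v] norm_ge_zero[of u] norm_ge_zero[of v] by linarith+
    ultimately show ?thesis by (metis linear_add)
  qed
  have L_local: "L (x + u) v = L x v" if "norm u < D / 8" "norm v < D / 8" for x u v
  proof (rule short_representative_unique[OF disc])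
    have short: "norm u < D / 2" "norm v < D / 2" "norm (u + v) < D / 2"
      using that norm_triangle_ineq[of u v] \<open>D > 0\<close> by simp_all
    show "(f (x + u + v) - f (x + u)) - L (x + u) v \<in> lattice b"
      using L[OF short(2), of "x + u"] by simp
    have "(f (x + u + v) - f (x + u)) - L x v
        = (f (x + (u + v)) - f x - L x (u + v)) - (f (x + u) - f x - L x u)"
      using L_add[OF that] by (simp add: algebra_simps)
    also have "\<dots> \<in> lattice b"
      using L[OF short(3), of x] L[OF short(1), of x] by (blast intro: lattice_diff)
    finally show "(f (x + u + v) - f (x + u)) - L x v \<in> lattice b" .
    show "norm (L (x + u) v) + norm (L x v) < D"
      using L[OF short(2), of "x + u"] L[OF short(2), of x] that \<open>D > 0\<close> by simp
  qed
  have "\<forall>v. norm v < D / 8 \<longrightarrow> L x v = L y v"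
  proof (rule locally_related_imp_related[where R = "\<lambda>x y. \<forall>v. norm v < D / 8 \<longrightarrow> L x v = L y v"])
    fix x
    have "\<forall>v. norm v < D / 8 \<longrightarrow> L x v = L y v" if "dist x y < D / 8" for y
      using L_local[of "y - x" _ x] that by (simp add: dist_norm norm_minus_commute)
    then show "\<exists>e>0. \<forall>y. dist x y < e \<longrightarrow> (\<forall>v. norm v < D / 8 \<longrightarrow> L x v = L y v)"
      using \<open>D > 0\<close> by (intro exI[of _ "D / 8"]) auto
  qed auto
  with \<open>norm v < D / 8\<close> show ?thesis by blast
qed

lemma torus_isometry_local_linear_lift:
  assumes "lattice_basis b" and iso: "torus_isometry b f"
  obtains A \<rho> where "linear A" "\<rho> > 0" "\<And>x u. norm u < \<rho> \<Longrightarrow> f (x + u) - f x - A u \<in> lattice b"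
proof -
  obtain D where "D > 0" and disc: "\<forall>l\<in>lattice b. l \<noteq> 0 \<longrightarrow> D \<le> norm l"
    using lattice_discrete[OF assms(1)] by blast
  define L where "L x v = (SOME w. f (x + v) - f x - w \<in> lattice b \<and> norm w = norm v)" for x v
  have L: "f (x + v) - f x - L x v \<in> lattice b \<and> norm (L x v) = norm v" if "norm v < D / 2" for v x
    using someI_ex[OF torus_isometry_short_lift[OF disc iso that]] by (simp add: L_def)
  obtain A where "linear A" and A: "\<And>v. norm v < D / 4 \<Longrightarrow> A v = L 0 v"
    using short_lift_locally_linear[OF disc \<open>D > 0\<close> iso L] by blast
  moreover have "f (x + u) - f x - A u \<in> lattice b" if "norm u < D / 8" for x u
  proof -
    have "norm u < D / 4" "norm u < D / 2" using that norm_ge_zero[of u] by linarith+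
    then show ?thesis
      using L[of u x] A[of u] short_lift_base_independent[OF disc \<open>D > 0\<close> iso L that, of x 0]
      by simp
  qed
  moreover have "D / 8 > 0" using \<open>D > 0\<close> by simp
  ultimately show ?thesis using that by blast
qed

definition affine_lift ::
    "('n::finite \<Rightarrow> real^'n) \<Rightarrow> (real^'n \<Rightarrow> real^'n) \<Rightarrow> (real^'n \<Rightarrow> real^'n) \<Rightarrow> real^'n \<Rightarrow> bool" where
  "affine_lift b f A c \<longleftrightarrow>
     linear A \<and> (\<forall>l\<in>lattice b. A l \<in> lattice b) \<and> (\<forall>x. lat_eq b (f x) (A x + c))"

lemma locally_lattice_constant:
  assumes "\<rho> > 0" and step: "\<And>x u. norm u < \<rho> \<Longrightarrow> g (x + u) - g x \<in> lattice b"
  shows "g x - g y \<in> lattice b"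
proof (rule locally_related_imp_related[where R = "\<lambda>x y. g x - g y \<in> lattice b"])
  fix x
  have "g x - g y \<in> lattice b" if "dist x y < \<rho>" for y
    using lattice_uminus[OF step[of "y - x" x]] that by (simp add: dist_norm norm_minus_commute)
  with \<open>\<rho> > 0\<close> show "\<exists>e>0. \<forall>y. dist x y < e \<longrightarrow> g x - g y \<in> lattice b" by blast
next
  fix x y z assume "g x - g y \<in> lattice b" "g y - g z \<in> lattice b"
  from lattice_add[OF this] show "g x - g z \<in> lattice b" by simp
qed (metis lattice_uminus minus_diff_eq)

lemma torus_isometry_affine_lift:
  assumes "lattice_basis b" and iso: "torus_isometry b f"
  shows "\<exists>A c. affine_lift b f A c"
proof -
  obtain A \<rho> where A: "linear A" and "\<rho> > 0"
    and step: "\<And>x u. norm u < \<rho> \<Longrightarrow> f (x + u) - f x - A u \<in> lattice b"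
    using torus_isometry_local_linear_lift[OF assms] by blast
  have "(f (x + u) - A (x + u)) - (f x - A x) = f (x + u) - f x - A u" for x u
    by (simp add: linear_add[OF A])
  then have "(f (x + u) - A (x + u)) - (f x - A x) \<in> lattice b" if "norm u < \<rho>" for x u
    using step[OF that] by metis
  then have cong: "(f x - A x) - (f y - A y) \<in> lattice b" for x y
    by (rule locally_lattice_constant[OF \<open>\<rho> > 0\<close>])
  obtain D where "D > 0" and disc: "\<forall>l\<in>lattice b. l \<noteq> 0 \<longrightarrow> D \<le> norm l"
    using lattice_discrete[OF assms(1)] by blast
  have "A l \<in> lattice b" if "l \<in> lattice b" for l
  proof -
    have "tdist b (f l) (f 0) = 0"
      using iso tdist_eq_0_iff[OF disc \<open>D > 0\<close>] that unfolding torus_isometry_def by simp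
    then have "f l - f 0 \<in> lattice b" using tdist_eq_0_iff[OF disc \<open>D > 0\<close>] by simp
    from lattice_diff[OF this cong[of l 0]] show ?thesis by (simp add: linear_0[OF A])
  qed
  moreover have "lat_eq b (f x) (A x + f 0)" for x
    using cong[of x 0] by (simp add: lat_eq_def linear_0[OF A] algebra_simps)
  ultimately show ?thesis using A unfolding affine_lift_def by blast
qed

lemma affine_lift_unique:
  assumes "lattice_basis b" and f: "affine_lift b f A c" and g: "affine_lift b g B d"
    and fg: "\<And>x. lat_eq b (f x) (g x)"
  shows "A = B" "lat_eq b c d"
proof -
  have "linear (\<lambda>x. A x - B x)"
    using f g unfolding affine_lift_def by (simp add: linear_compose_sub)
  moreover have "(A x - B x) + (c - d) \<in> lattice b" for x
  proof -
    have "(A x - B x) + (c - d) = ((f x - g x) - (f x - (A x + c))) + (g x - (B x + d))"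
      by (simp add: algebra_simps)
    also have "\<dots> \<in> lattice b"
      using f g fg unfolding affine_lift_def lat_eq_def by (intro lattice_add[OF lattice_diff]) auto
    finally show ?thesis .
  qed
  ultimately have "(\<lambda>x. A x - B x) = (\<lambda>x. 0)" "c - d \<in> lattice b"
    using linear_plus_const_in_lattice[OF assms(1)] by blast+
  then show "A = B" "lat_eq b c d"
    unfolding lat_eq_def by (auto simp: fun_eq_iff)
qed

lemma affine_lift_cong:
  assumes "affine_lift b f A c" "\<And>x. lat_eq b (g x) (f x)"
  shows "affine_lift b g A c"
proof -
  have "g x - (A x + c) \<in> lattice b" for x
  proof -
    have "g x - (A x + c) = (g x - f x) + (f x - (A x + c))" by simp
    also have "\<dots> \<in> lattice b"
      using assms unfolding affine_lift_def lat_eq_def by (intro lattice_add) auto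
    finally show ?thesis .
  qed
  with assms(1) show ?thesis unfolding affine_lift_def lat_eq_def by blast
qed

lemma affine_lift_id: "affine_lift b (\<lambda>x. x) id 0"
  unfolding affine_lift_def lat_eq_def by (simp add: zero_in_lattice linear_id)

lemma affine_lift_comp:
  assumes f: "affine_lift b f A c" and g: "affine_lift b g B d"
  shows "affine_lift b (\<lambda>x. f (g x)) (A \<circ> B) (A d + c)"
proof -
  have A: "linear A" "\<forall>l\<in>lattice b. A l \<in> lattice b"
    using f unfolding affine_lift_def by auto
  have "f (g x) - ((A \<circ> B) x + (A d + c)) \<in> lattice b" for x
  proof -
    have "f (g x) - ((A \<circ> B) x + (A d + c)) = (f (g x) - (A (g x) + c)) + A (g x - (B x + d))"
      by (simp add: linear_diff[OF A(1)] linear_add[OF A(1)] algebra_simps)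
    also have "\<dots> \<in> lattice b"
      using f g A(2) unfolding affine_lift_def lat_eq_def by (intro lattice_add) auto
    finally show ?thesis .
  qed
  then show ?thesis
    using f g unfolding affine_lift_def lat_eq_def by (auto intro: linear_compose)
qed

section \<open>Complexified affine maps\<close>

lemma embC_0: "embC 0 = 0"
  by (simp add: embC_def vec_eq_iff)

lemma embC_add: "embC (x + y) = embC x + embC y"
  by (simp add: embC_def vec_eq_iff)

lemma embC_diff: "embC (x - y) = embC x - embC y"
  by (simp add: embC_def vec_eq_iff)

lemma embC_in_clattice: "l \<in> lattice b \<Longrightarrow> embC l \<in> clattice b"
  by (simp add: clattice_def)

lemma zero_in_clattice: "0 \<in> clattice b"
  using embC_in_clattice[OF zero_in_lattice] by (simp add: embC_0)

lemma clattice_add: "z \<in> clattice b \<Longrightarrow> w \<in> clattice b \<Longrightarrow> z + w \<in> clattice b"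
  unfolding clattice_def by (auto simp flip: embC_add intro: lattice_add)

lemma clattice_diff: "z \<in> clattice b \<Longrightarrow> w \<in> clattice b \<Longrightarrow> z - w \<in> clattice b"
  unfolding clattice_def by (auto simp flip: embC_diff intro: lattice_diff)

lemma countable_clattice: "countable (clattice b)"
  unfolding clattice_def by (intro countable_image countable_lattice)

lemma clat_eq_refl: "clat_eq b z z"
  by (simp add: clat_eq_def zero_in_clattice)

lemma clat_eq_sym: "clat_eq b z w \<Longrightarrow> clat_eq b w z"
  unfolding clat_eq_def using clattice_diff[OF zero_in_clattice, of "z - w" b] by simp

lemma clat_eq_trans: "clat_eq b z w \<Longrightarrow> clat_eq b w v \<Longrightarrow> clat_eq b z v"
  unfolding clat_eq_def using clattice_add by fastforce

lemma clat_eq_embC: "lat_eq b x y \<Longrightarrow> clat_eq b (embC x) (embC y)"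
  unfolding lat_eq_def clat_eq_def by (simp add: embC_in_clattice flip: embC_diff)

definition vec_Re :: "complex^'n \<Rightarrow> real^'n" where
  "vec_Re z = (\<chi> j. Re (z $ j))"

definition vec_Im :: "complex^'n \<Rightarrow> real^'n" where
  "vec_Im z = (\<chi> j. Im (z $ j))"

definition vec_Complex :: "real^'n \<Rightarrow> real^'n \<Rightarrow> complex^'n" where
  "vec_Complex x y = (\<chi> j. Complex (x $ j) (y $ j))"

lemma vec_Re_Complex [simp]: "vec_Re (vec_Complex x y) = x"
  and vec_Im_Complex [simp]: "vec_Im (vec_Complex x y) = y"
  and vec_Complex_Re_Im [simp]: "vec_Complex (vec_Re z) (vec_Im z) = z"
  by (simp_all add: vec_Re_def vec_Im_def vec_Complex_def vec_eq_iff complex_eq_iff)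

lemma vec_Re_add: "vec_Re (z + w) = vec_Re z + vec_Re w"
  and vec_Im_add: "vec_Im (z + w) = vec_Im z + vec_Im w"
  and vec_Re_diff: "vec_Re (z - w) = vec_Re z - vec_Re w"
  and vec_Im_diff: "vec_Im (z - w) = vec_Im z - vec_Im w"
  and vec_Re_scaleR: "vec_Re (r *\<^sub>R z) = r *\<^sub>R vec_Re z"
  and vec_Im_scaleR: "vec_Im (r *\<^sub>R z) = r *\<^sub>R vec_Im z"
  by (simp_all add: vec_Re_def vec_Im_def vec_eq_iff)

lemma vec_Complex_add: "vec_Complex x y + vec_Complex x' y' = vec_Complex (x + x') (y + y')"
  by (simp add: vec_Complex_def vec_eq_iff complex_eq_iff)

lemma vec_Complex_diff: "vec_Complex x y - vec_Complex x' y' = vec_Complex (x - x') (y - y')"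
  by (simp add: vec_Complex_def vec_eq_iff complex_eq_iff)

lemma vec_Complex_scaleR: "r *\<^sub>R vec_Complex x y = vec_Complex (r *\<^sub>R x) (r *\<^sub>R y)"
  by (simp add: vec_Complex_def vec_eq_iff complex_eq_iff)

lemma embC_eq_vec_Complex: "embC x = vec_Complex x 0"
  by (simp add: embC_def vec_Complex_def vec_eq_iff complex_eq_iff)

definition complexify :: "(real^'n \<Rightarrow> real^'m) \<Rightarrow> complex^'n \<Rightarrow> complex^'m" where
  "complexify A z = vec_Complex (A (vec_Re z)) (A (vec_Im z))"

lemma complexify_add: "linear A \<Longrightarrow> complexify A (z + w) = complexify A z + complexify A w"
  by (simp add: complexify_def vec_Re_add vec_Im_add linear_add vec_Complex_add)

lemma complexify_diff: "linear A \<Longrightarrow> complexify A (z - w) = complexify A z - complexify A w"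
  by (simp add: complexify_def vec_Re_diff vec_Im_diff linear_diff vec_Complex_diff)

lemma complexify_embC: "linear A \<Longrightarrow> complexify A (embC x) = embC (A x)"
  by (simp add: complexify_def embC_eq_vec_Complex linear_0)

lemma complexify_comp: "complexify A (complexify B z) = complexify (A \<circ> B) z"
  by (simp add: complexify_def)

lemma complexify_id: "complexify id z = z"
  by (simp add: complexify_def)

lemma complexify_scalar_mult:
  assumes A: "linear A"
  shows "complexify A (c *s v) = c *s complexify A v"
proof -
  have Re: "vec_Re (c *s v) = Re c *\<^sub>R vec_Re v - Im c *\<^sub>R vec_Im v"
    and Im: "vec_Im (c *s v) = Re c *\<^sub>R vec_Im v + Im c *\<^sub>R vec_Re v"
    by (simp_all add: vec_Re_def vec_Im_def vec_eq_iff)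
  show ?thesis
    unfolding complexify_def Re Im
    by (simp add: linear_diff[OF A] linear_add[OF A] linear_scale[OF A]
        vec_Complex_def vec_eq_iff complex_eq_iff)
qed

lemma linear_complexify: "linear A \<Longrightarrow> linear (complexify A)"
  by (rule linearI)
    (simp_all add: complexify_def vec_Re_add vec_Im_add linear_add vec_Complex_add
      vec_Re_scaleR vec_Im_scaleR linear_scale vec_Complex_scaleR)

definition caffine :: "(real^'n \<Rightarrow> real^'n) \<Rightarrow> real^'n \<Rightarrow> complex^'n \<Rightarrow> complex^'n" where
  "caffine A c z = complexify A z + embC c"

lemma caffine_embC: "linear A \<Longrightarrow> caffine A c (embC x) = embC (A x + c)"
  by (simp add: caffine_def complexify_embC embC_add)

lemma caffine_comp:
  "linear A \<Longrightarrow> caffine A c (caffine B d z) = caffine (A \<circ> B) (A d + c) z"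
  by (simp add: caffine_def complexify_add complexify_embC complexify_comp embC_add add.assoc)

lemma caffine_id: "caffine id 0 z = z"
  by (simp add: caffine_def complexify_id embC_0)

lemma clat_eq_caffine:
  assumes "linear A" "\<forall>l\<in>lattice b. A l \<in> lattice b" "clat_eq b z w" "lat_eq b c d"
  shows "clat_eq b (caffine A c z) (caffine A d w)"
proof -
  obtain l where "l \<in> lattice b" "z - w = embC l"
    using assms(3) unfolding clat_eq_def clattice_def by blast
  then have "caffine A c z - caffine A d w = embC (A l + (c - d))"
    using assms(1) by (simp add: caffine_def complexify_embC embC_add embC_diff
        flip: complexify_diff)
  with \<open>l \<in> lattice b\<close> assms(2,4) show ?thesis
    unfolding clat_eq_def lat_eq_def by (auto intro: embC_in_clattice lattice_add)
qed

lemma cvec_holomorphic_caffine: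
  assumes "linear A" "open S"
  shows "cvec_holomorphic_on (caffine A c) S"
  unfolding cvec_holomorphic_on_def
proof (intro conjI ballI exI \<open>open S\<close>)
  fix z
  have "bounded_linear (complexify A)"
    using linear_complexify[OF assms(1)] linear_conv_bounded_linear by blast
  then show "(caffine A c has_derivative complexify A) (at z)"
    unfolding caffine_def by (auto intro!: derivative_eq_intros bounded_linear_imp_has_derivative)
  show "\<forall>c v. complexify A (\<chi> j. c * v $ j) = (\<chi> j. c * complexify A v $ j)"
    using complexify_scalar_mult[OF assms(1)] by (simp add: vector_scalar_mult_def)
qed

lemma ctorus_holomorphic_caffine: "linear A \<Longrightarrow> ctorus_holomorphic b (caffine A c)"
  unfolding ctorus_holomorphic_def clat_eq_def
  using cvec_holomorphic_caffine zero_in_clattice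
  by (auto intro!: exI[of _ 1] exI[of _ "caffine A c"])

lemma caffine_quot_action:
  assumes b: "lattice_basis b" and "monoid G" and \<phi>: "quot_action (lat_eq b) G \<phi>"
    and lift: "\<And>g. g \<in> carrier G \<Longrightarrow> affine_lift b (\<phi> g) (A g) (c g)"
  shows "quot_action (clat_eq b) G (\<lambda>g. caffine (A g) (c g))"
  unfolding quot_action_def
proof (intro conjI ballI allI impI)
  fix g z w assume "g \<in> carrier G" "clat_eq b z w"
  with lift show "clat_eq b (caffine (A g) (c g) z) (caffine (A g) (c g) w)"
    unfolding affine_lift_def by (blast intro: clat_eq_caffine lat_eq_refl)
next
  fix z
  have one: "\<one>\<^bsub>G\<^esub> \<in> carrier G" by (rule monoid.one_closed[OF \<open>monoid G\<close>])
  have "affine_lift b (\<phi> \<one>\<^bsub>G\<^esub>) id 0"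
    using affine_lift_cong[OF affine_lift_id] \<phi> unfolding quot_action_def by blast
  then have "A \<one>\<^bsub>G\<^esub> = id" "lat_eq b (c \<one>\<^bsub>G\<^esub>) 0"
    using affine_lift_unique[OF b lift[OF one]] lat_eq_refl by blast+
  then show "clat_eq b (caffine (A \<one>\<^bsub>G\<^esub>) (c \<one>\<^bsub>G\<^esub>) z) z"
    using clat_eq_caffine[OF linear_id _ clat_eq_refl, of b "c \<one>\<^bsub>G\<^esub>" 0 z]
    by (simp add: caffine_id)
next
  fix g h z assume g: "g \<in> carrier G" and h: "h \<in> carrier G"
  then have gh: "g \<otimes>\<^bsub>G\<^esub> h \<in> carrier G" by (rule monoid.m_closed[OF \<open>monoid G\<close>])
  have "affine_lift b (\<phi> (g \<otimes>\<^bsub>G\<^esub> h)) (A g \<circ> A h) (A g (c h) + c g)"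
    using affine_lift_cong[OF affine_lift_comp[OF lift[OF g] lift[OF h]]] \<phi> g h
    unfolding quot_action_def by blast
  then have "A (g \<otimes>\<^bsub>G\<^esub> h) = A g \<circ> A h" "lat_eq b (c (g \<otimes>\<^bsub>G\<^esub> h)) (A g (c h) + c g)"
    using affine_lift_unique[OF b lift[OF gh]] lat_eq_refl by blast+
  moreover have "linear (A g)" "linear (A (g \<otimes>\<^bsub>G\<^esub> h))" "\<forall>l\<in>lattice b. A (g \<otimes>\<^bsub>G\<^esub> h) l \<in> lattice b"
    using lift[OF g] lift[OF gh] unfolding affine_lift_def by auto
  ultimately show "clat_eq b (caffine (A (g \<otimes>\<^bsub>G\<^esub> h)) (c (g \<otimes>\<^bsub>G\<^esub> h)) z)
      (caffine (A g) (c g) (caffine (A h) (c h) z))"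
    by (simp add: caffine_comp clat_eq_caffine clat_eq_refl)
qed

lemma affine_lift_equivariant:
  "affine_lift b f A c \<Longrightarrow> clat_eq b (caffine A c (embC x)) (embC (f x))"
  unfolding affine_lift_def by (auto simp: caffine_embC intro: clat_eq_sym[OF clat_eq_embC])

section \<open>Algebraicity\<close>

lemma ccomb_eq_vec_Complex:
  "ccomb b u = vec_Complex (rcomb b (\<lambda>i. Re (u i))) (rcomb b (\<lambda>i. Im (u i)))"
  by (simp add: ccomb_def vec_Complex_def rcomb_def vec_eq_iff complex_eq_iff sum_component)

lemma ccomb_add: "ccomb b u + ccomb b v = ccomb b (\<lambda>i. u i + v i)"
  by (simp add: ccomb_def vec_eq_iff sum.distrib distrib_right)

lemma ccomb_inj:
  assumes "lattice_basis b" "ccomb b u = ccomb b v"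
  shows "u = v"
proof -
  have "(\<lambda>i. Re (u i)) = (\<lambda>i. Re (v i))" "(\<lambda>i. Im (u i)) = (\<lambda>i. Im (v i))"
    using arg_cong[OF assms(2), of vec_Re] arg_cong[OF assms(2), of vec_Im]
    unfolding ccomb_eq_vec_Complex by (auto intro: rcomb_inj[OF assms(1)])
  then show ?thesis by (auto simp: fun_eq_iff complex_eq_iff)
qed

lemma ccomb_surj:
  assumes "lattice_basis b"
  obtains u where "ccomb b u = z"
proof -
  obtain x where x: "rcomb b x = vec_Re z" by (rule rcomb_surj[OF assms])
  obtain y where y: "rcomb b y = vec_Im z" by (rule rcomb_surj[OF assms])
  from x y have "ccomb b (\<lambda>i. Complex (x i) (y i)) = z"
    unfolding ccomb_eq_vec_Complex by simp
  then show ?thesis by (rule that)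
qed

lemma ccoords_ccomb: "lattice_basis b \<Longrightarrow> ccoords b (ccomb b u) = u"
  unfolding ccoords_def by (rule the_equality) (auto dest: ccomb_inj)

lemma ccomb_ccoords:
  assumes "lattice_basis b"
  shows "ccomb b (ccoords b z) = z"
proof -
  obtain u where "ccomb b u = z" by (rule ccomb_surj[OF assms])
  from this[symmetric] show ?thesis by (simp add: ccoords_ccomb[OF assms])
qed

lemma linear_rcomb:
  assumes A: "linear A" and N: "\<And>i. A (b i) = rcomb b (\<lambda>k. of_int (N i k))"
  shows "A (rcomb b c) = rcomb b (\<lambda>k. \<Sum>i\<in>UNIV. c i * of_int (N i k))"
proof -
  have "A (rcomb b c) = (\<Sum>i\<in>UNIV. \<Sum>k\<in>UNIV. (c i * of_int (N i k)) *\<^sub>R b k)"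
    unfolding rcomb_def by (simp add: linear_sum[OF A] linear_scale[OF A] N rcomb_def scaleR_sum_right)
  also have "\<dots> = rcomb b (\<lambda>k. \<Sum>i\<in>UNIV. c i * of_int (N i k))"
    unfolding rcomb_def by (subst sum.swap) (simp add: scaleR_sum_left)
  finally show ?thesis .
qed

lemma complexify_ccomb:
  assumes "linear A" "\<And>i. A (b i) = rcomb b (\<lambda>k. of_int (N i k))"
  shows "complexify A (ccomb b u) = ccomb b (\<lambda>k. \<Sum>i\<in>UNIV. u i * of_int (N i k))"
  unfolding complexify_def ccomb_eq_vec_Complex by (simp add: linear_rcomb[OF assms])

text \<open>In the coordinates of the basis a lattice-preserving affine map is u \<mapsto> u N + w with an
  integer matrix N, so after exponentiation each coordinate is a monomial.\<close>
lemma caffine_algebraic: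
  fixes b :: "'n::finite \<Rightarrow> real^'n"
  assumes b: "lattice_basis b" and A: "linear A" "\<forall>l\<in>lattice b. A l \<in> lattice b"
  shows "ctorus_algebraic b (caffine A c)"
proof -
  have "\<forall>i. \<exists>k. A (b i) = rcomb b (\<lambda>l. of_int (k l))"
  proof
    fix i
    have "A (b i) \<in> lattice b" using A(2) basis_in_lattice by blast
    then show "\<exists>k. A (b i) = rcomb b (\<lambda>l. of_int (k l))" unfolding mem_lattice_iff .
  qed
  from choice[OF this] obtain N where N: "\<forall>i. A (b i) = rcomb b (\<lambda>k. of_int (N i k))" ..
  obtain w where w: "ccomb b w = embC c" using ccomb_surj[OF b] by blast
  define K where "K j = {\<lambda>i. N i j}" for j
  define a where "a j = (\<lambda>_::'n \<Rightarrow> int. exp (2 * of_real pi * \<i> * w j))" for j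
  have "expmap b (caffine A c z) $ j = laurent_eval (K j) (a j) (expmap b z)" for z j
  proof -
    define u where "u = ccoords b z"
    have z: "z = ccomb b u"
      unfolding u_def using ccomb_ccoords[OF b] by simp
    have "caffine A c z = ccomb b (\<lambda>k. (\<Sum>i\<in>UNIV. u i * of_int (N i k)) + w k)"
      unfolding caffine_def z by (simp add: complexify_ccomb[OF A(1) N[rule_format]] flip: w ccomb_add)
    then have "expmap b (caffine A c z) $ j
        = exp (2 * of_real pi * \<i> * ((\<Sum>i\<in>UNIV. u i * of_int (N i j)) + w j))"
      by (simp add: expmap_def ccoords_ccomb[OF b])
    also have "\<dots> = exp (2 * of_real pi * \<i> * w j
        + (\<Sum>i\<in>UNIV. of_int (N i j) * (2 * of_real pi * \<i> * u i)))"
      by (simp add: algebra_simps sum_distrib_left)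
    also have "\<dots> = exp (2 * of_real pi * \<i> * w j)
        * (\<Prod>i\<in>UNIV. exp (2 * of_real pi * \<i> * u i) powi (N i j))"
      by (simp add: exp_add exp_sum exp_power_int)
    also have "\<dots> = laurent_eval (K j) (a j) (expmap b z)"
      by (simp add: laurent_eval_def K_def a_def expmap_def u_def)
    finally show ?thesis .
  qed
  then show ?thesis
    unfolding ctorus_algebraic_def K_def by (intro exI[of _ K] exI[of _ a]) (simp add: K_def)
qed

section \<open>Uniqueness by the identity theorem\<close>

lemma has_derivative_line:
  fixes X Y :: "complex^'n"
  shows "((\<lambda>t. X + t *s Y) has_derivative (\<lambda>s. s *s Y)) (at t)"
proof -
  have "linear (\<lambda>s::complex. s *s Y)"
    unfolding vector_scalar_mult_def
    by (rule linearI) (simp_all add: vec_eq_iff algebra_simps)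
  then have "bounded_linear (\<lambda>s::complex. s *s Y)"
    using linear_conv_bounded_linear by blast
  then show ?thesis
    by (auto intro!: derivative_eq_intros bounded_linear_imp_has_derivative)
qed

lemma holomorphic_on_line:
  fixes h :: "complex^'n \<Rightarrow> complex^'m" and X Y :: "complex^'n"
  assumes "cvec_holomorphic_on h B"
  shows "(\<lambda>t. h (X + t *s Y) $ j) holomorphic_on {t. X + t *s Y \<in> B}"
  unfolding holomorphic_on_def
proof
  fix t assume "t \<in> {t. X + t *s Y \<in> B}"
  then have "\<exists>L. (h has_derivative L) (at (X + t *s Y)) \<and> (\<forall>c v. L (\<chi> j. c * v $ j) = (\<chi> j. c * L v $ j))"
    using assms unfolding cvec_holomorphic_on_def by simp
  then obtain L where L: "(h has_derivative L) (at (X + t *s Y))"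
    and clin: "\<forall>c v. L (\<chi> j. c * v $ j) = (\<chi> j. c * L v $ j)"
    by blast
  have "((\<lambda>t. h (X + t *s Y)) has_derivative (\<lambda>s. L (s *s Y))) (at t)"
    using diff_chain_at[OF has_derivative_line L] by (simp add: o_def)
  then have "((\<lambda>t. h (X + t *s Y) $ j) has_derivative (\<lambda>s. L (s *s Y) $ j)) (at t)"
    by (rule bounded_linear.has_derivative[OF bounded_linear_vec_nth])
  moreover have "(\<lambda>s. L (s *s Y) $ j) = (*) (L Y $ j)"
  proof
    fix s
    have "L (s *s Y) = s *s L Y"
      using clin unfolding vector_scalar_mult_def by blast
    then show "L (s *s Y) $ j = L Y $ j * s" by (simp add: mult.commute)
  qed
  ultimately have "((\<lambda>t. h (X + t *s Y) $ j) has_field_derivative L Y $ j) (at t)"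
    by (simp add: has_field_derivative_def)
  then show "(\<lambda>t. h (X + t *s Y) $ j) field_differentiable at t within {t. X + t *s Y \<in> B}"
    using field_differentiable_at_within field_differentiable_def by blast
qed

lemma holomorphic_countable_on_connected_imp_constant:
  assumes hol: "g holomorphic_on U" and "open U" "connected U"
    and "C \<subseteq> U" "connected C" "t1 \<in> C" "t2 \<in> C" "t1 \<noteq> t2" "countable (g ` C)"
    and "t \<in> U"
  shows "g t = g t1"
proof -
  have "continuous_on C g"
    by (rule continuous_on_subset[OF holomorphic_on_imp_continuous_on[OF hol] \<open>C \<subseteq> U\<close>])
  then have "connected (g ` C)"
    by (rule connected_continuous_image[OF _ \<open>connected C\<close>])
  then have "\<exists>a. g ` C \<subseteq> {a}"
    using connected_card_eq_iff_nontrivial \<open>countable (g ` C)\<close> by blast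
  then have zero: "g s - g t1 = 0" if "s \<in> C" for s
    using that \<open>t1 \<in> C\<close> by (auto simp: image_subset_iff)
  have limpt: "t1 islimpt C"
    by (rule connected_imp_perfect[OF \<open>connected C\<close> \<open>t1 \<in> C\<close>]) (use assms(6-8) in auto)
  have "(\<lambda>s. g s - g t1) holomorphic_on U"
    using hol by (intro holomorphic_intros)
  from analytic_continuation[OF this \<open>open U\<close> \<open>connected U\<close> \<open>C \<subseteq> U\<close> _ limpt zero \<open>t \<in> U\<close>]
  show ?thesis using assms(4,6) by auto
qed

lemma cvec_holomorphic_on_subset:
  "cvec_holomorphic_on h S \<Longrightarrow> open T \<Longrightarrow> T \<subseteq> S \<Longrightarrow> cvec_holomorphic_on h T"
  unfolding cvec_holomorphic_on_def by blast

lemma cvec_holomorphic_on_diff: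
  assumes "cvec_holomorphic_on h1 S" "cvec_holomorphic_on h2 S"
  shows "cvec_holomorphic_on (\<lambda>w. h1 w - h2 w) S"
  unfolding cvec_holomorphic_on_def
proof (intro conjI ballI)
  show "open S" using assms(1) unfolding cvec_holomorphic_on_def by blast
  fix z assume "z \<in> S"
  then obtain L1 L2 where L: "(h1 has_derivative L1) (at z)" "(h2 has_derivative L2) (at z)"
    and "\<forall>c v. L1 (\<chi> j. c * v $ j) = (\<chi> j. c * L1 v $ j)"
      "\<forall>c v. L2 (\<chi> j. c * v $ j) = (\<chi> j. c * L2 v $ j)"
    using assms unfolding cvec_holomorphic_on_def by meson
  then have "\<forall>c v. L1 (\<chi> j. c * v $ j) - L2 (\<chi> j. c * v $ j) = (\<chi> j. c * (L1 v - L2 v) $ j)"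
    by (simp add: vec_eq_iff right_diff_distrib)
  with has_derivative_diff[OF L] show "\<exists>L. ((\<lambda>w. h1 w - h2 w) has_derivative L) (at z)
      \<and> (\<forall>c v. L (\<chi> j. c * v $ j) = (\<chi> j. c * L v $ j))"
    by blast
qed

lemma ctorus_holomorphic_diff:
  assumes P: "ctorus_holomorphic b P" and Q: "ctorus_holomorphic b Q"
  shows "ctorus_holomorphic b (\<lambda>w. P w - Q w)"
  unfolding ctorus_holomorphic_def
proof
  fix z
  obtain e1 h1 where e1: "e1 > 0" "cvec_holomorphic_on h1 (ball z e1)"
    "\<forall>w\<in>ball z e1. clat_eq b (h1 w) (P w)"
    using P unfolding ctorus_holomorphic_def by meson
  obtain e2 h2 where e2: "e2 > 0" "cvec_holomorphic_on h2 (ball z e2)"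
    "\<forall>w\<in>ball z e2. clat_eq b (h2 w) (Q w)"
    using Q unfolding ctorus_holomorphic_def by meson
  define e where "e = min e1 e2"
  have "ball z e \<subseteq> ball z e1" "ball z e \<subseteq> ball z e2"
    by (auto simp: e_def)
  then have "cvec_holomorphic_on (\<lambda>w. h1 w - h2 w) (ball z e)"
    using cvec_holomorphic_on_subset[OF e1(2) open_ball] cvec_holomorphic_on_subset[OF e2(2) open_ball]
    by (blast intro: cvec_holomorphic_on_diff)
  moreover have "clat_eq b (h1 w - h2 w) (P w - Q w)" if "w \<in> ball z e" for w
  proof -
    have "h1 w - P w \<in> clattice b" "h2 w - Q w \<in> clattice b"
      using e1(3) e2(3) that unfolding clat_eq_def e_def by auto
    from clattice_diff[OF this] show ?thesis
      unfolding clat_eq_def by (simp add: algebra_simps)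
  qed
  moreover have "e > 0" using e1(1) e2(1) by (simp add: e_def)
  ultimately show "\<exists>e>0. \<exists>h. cvec_holomorphic_on h (ball z e)
      \<and> (\<forall>w\<in>ball z e. clat_eq b (h w) (P w - Q w))"
    by blast
qed

definition spreads_locally :: "complex set \<Rightarrow> bool" where
  "spreads_locally T \<longleftrightarrow> (\<forall>t0. \<exists>\<rho>>0. \<forall>C t1 t2.
     C \<subseteq> ball t0 \<rho> \<inter> T \<and> connected C \<and> t1 \<in> C \<and> t2 \<in> C \<and> t1 \<noteq> t2 \<longrightarrow> ball t0 \<rho> \<subseteq> T)"

lemma spreads_locally_closed_interior:
  assumes spreads: "spreads_locally T"
  shows "closed (interior T)"
  unfolding closure_subset_eq[symmetric]
proof
  fix t0 assume "t0 \<in> closure (interior T)"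
  obtain \<rho> where "\<rho> > 0" and \<rho>: "\<And>C t1 t2. C \<subseteq> ball t0 \<rho> \<inter> T \<Longrightarrow> connected C
      \<Longrightarrow> t1 \<in> C \<Longrightarrow> t2 \<in> C \<Longrightarrow> t1 \<noteq> t2 \<Longrightarrow> ball t0 \<rho> \<subseteq> T"
    using spreads unfolding spreads_locally_def by meson
  have "ball t0 \<rho> \<inter> interior T \<noteq> {}"
    using open_Int_closure_eq_empty[of "ball t0 \<rho>" "interior T"]
      \<open>t0 \<in> closure (interior T)\<close> \<open>\<rho> > 0\<close> by force
  then obtain t1 where "t1 \<in> ball t0 \<rho> \<inter> interior T" by blast
  then obtain \<epsilon> where "\<epsilon> > 0" "ball t1 \<epsilon> \<subseteq> ball t0 \<rho> \<inter> interior T"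
    by (rule openE[OF open_Int[OF open_ball open_interior]])
  then have "ball t1 \<epsilon> \<subseteq> ball t0 \<rho> \<inter> T"
    using interior_subset by blast
  moreover have "t1 \<in> ball t1 \<epsilon>" "t1 + of_real (\<epsilon> / 2) \<in> ball t1 \<epsilon>"
    using \<open>\<epsilon> > 0\<close> by (simp_all add: dist_norm)
  ultimately have "ball t0 \<rho> \<subseteq> T"
    by (rule \<rho>[OF _ connected_ball]) (use \<open>\<epsilon> > 0\<close> in simp)
  with \<open>\<rho> > 0\<close> show "t0 \<in> interior T" by (auto simp: mem_interior)
qed

lemma spreads_locally_eq_UNIV:
  assumes spreads: "spreads_locally T" and real: "\<And>r. of_real r \<in> T"
  shows "T = UNIV"
proof -
  obtain \<rho> where "\<rho> > 0" and \<rho>: "\<And>C t1 t2. C \<subseteq> ball 0 \<rho> \<inter> T \<Longrightarrow> connected C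
      \<Longrightarrow> t1 \<in> C \<Longrightarrow> t2 \<in> C \<Longrightarrow> t1 \<noteq> t2 \<Longrightarrow> ball 0 \<rho> \<subseteq> T"
    using spreads unfolding spreads_locally_def by meson
  have "of_real ` {0..\<rho> / 2} \<subseteq> ball 0 \<rho> \<inter> T"
    using \<open>\<rho> > 0\<close> real by auto
  moreover have "connected (complex_of_real ` {0..\<rho> / 2})"
    by (intro connected_continuous_image continuous_intros connected_Icc)
  moreover have "0 \<in> complex_of_real ` {0..\<rho> / 2}"
    using \<open>\<rho> > 0\<close> by (auto intro!: image_eqI[where x = 0])
  moreover have "of_real (\<rho> / 2) \<in> complex_of_real ` {0..\<rho> / 2}"
    using \<open>\<rho> > 0\<close> by (intro imageI) simp
  ultimately have "ball 0 \<rho> \<subseteq> T"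
    by (rule \<rho>) (use \<open>\<rho> > 0\<close> in simp)
  with \<open>\<rho> > 0\<close> have "0 \<in> interior T"
    by (auto simp: mem_interior)
  then have "interior T = UNIV"
    using clopen[of "interior T"] spreads_locally_closed_interior[OF spreads] by auto
  then show ?thesis using interior_subset by blast
qed

lemma ctorus_holomorphic_on_line_locally:
  fixes F :: "complex^'n \<Rightarrow> complex^'n" and X Y :: "complex^'n" and t0 :: complex
  assumes "ctorus_holomorphic b F"
  obtains \<rho> :: real and h :: "complex^'n \<Rightarrow> complex^'n" where "\<rho> > 0" "\<And>j. (\<lambda>t. h (X + t *s Y) $ j) holomorphic_on ball t0 \<rho>"
    "\<And>t. t \<in> ball t0 \<rho> \<Longrightarrow> clat_eq b (h (X + t *s Y)) (F (X + t *s Y))"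
proof -
  obtain e h where "e > 0" and h: "cvec_holomorphic_on h (ball (X + t0 *s Y) e)"
    "\<forall>w\<in>ball (X + t0 *s Y) e. clat_eq b (h w) (F w)"
    using assms unfolding ctorus_holomorphic_def by meson
  have "continuous (at t0) (\<lambda>t. X + t *s Y)"
    using has_derivative_line has_derivative_continuous by blast
  then obtain \<rho> where "\<rho> > 0" and \<rho>: "\<forall>s. dist s t0 < \<rho> \<longrightarrow> dist (X + s *s Y) (X + t0 *s Y) < e"
    unfolding continuous_at_eps_delta using \<open>e > 0\<close> by blast
  then have sub: "ball t0 \<rho> \<subseteq> {t. X + t *s Y \<in> ball (X + t0 *s Y) e}"
    by (auto simp: dist_commute)
  show ?thesis
  proof (rule that[OF \<open>\<rho> > 0\<close>])
    show "(\<lambda>t. h (X + t *s Y) $ j) holomorphic_on ball t0 \<rho>" for j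
      by (rule holomorphic_on_subset[OF holomorphic_on_line[OF h(1)] sub])
    show "clat_eq b (h (X + t *s Y)) (F (X + t *s Y))" if "t \<in> ball t0 \<rho>" for t
      using h(2) sub that by blast
  qed
qed

text \<open>Near t0 the map is a holomorphic h modulo the lattice; on a connected piece of the
  parameter set, h takes values in the countable lattice, so it is constant there, and by the
  identity theorem constant, hence in the lattice, on the whole disc.\<close>
lemma ctorus_holomorphic_spreads_locally:
  fixes b :: "'n::finite \<Rightarrow> real^'n" and F :: "complex^'n \<Rightarrow> complex^'n"
    and X Y :: "complex^'n"
  defines "T \<equiv> {t. F (X + t *s Y) \<in> clattice b}"
  assumes "ctorus_holomorphic b F"
  shows "spreads_locally T"
  unfolding spreads_locally_def
proof
  fix t0
  obtain \<rho> and h :: "complex^'n \<Rightarrow> complex^'n"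
    where "\<rho> > 0" and hol: "\<And>j. (\<lambda>t. h (X + t *s Y) $ j) holomorphic_on ball t0 \<rho>"
    and lift: "\<And>t. t \<in> ball t0 \<rho> \<Longrightarrow> clat_eq b (h (X + t *s Y)) (F (X + t *s Y))"
    using ctorus_holomorphic_on_line_locally[OF assms(2)] by blast
  have in_T: "t \<in> T \<longleftrightarrow> h (X + t *s Y) \<in> clattice b" if "t \<in> ball t0 \<rho>" for t
    using clattice_diff[OF _ lift[OF that, unfolded clat_eq_def]]
      clattice_add[OF _ lift[OF that, unfolded clat_eq_def]]
    unfolding T_def by force
  show "\<exists>\<rho>>0. \<forall>C t1 t2. C \<subseteq> ball t0 \<rho> \<inter> T \<and> connected C \<and> t1 \<in> C \<and> t2 \<in> C \<and> t1 \<noteq> t2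
      \<longrightarrow> ball t0 \<rho> \<subseteq> T"
  proof (intro exI[of _ \<rho>] conjI allI impI \<open>\<rho> > 0\<close>)
    fix C t1 t2
    assume C: "C \<subseteq> ball t0 \<rho> \<inter> T \<and> connected C \<and> t1 \<in> C \<and> t2 \<in> C \<and> t1 \<noteq> t2"
    have const: "h (X + t *s Y) $ j = h (X + t1 *s Y) $ j" if "t \<in> ball t0 \<rho>" for t j
    proof -
      have "(\<lambda>t. h (X + t *s Y) $ j) ` C \<subseteq> (\<lambda>v. v $ j) ` clattice b"
        using C in_T by blast
      then have "countable ((\<lambda>t. h (X + t *s Y) $ j) ` C)"
        using countable_clattice countable_image countable_subset by blast
      moreover have "C \<subseteq> ball t0 \<rho>" "connected C" "t1 \<in> C" "t2 \<in> C" "t1 \<noteq> t2"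
        using C by auto
      ultimately show ?thesis
        using holomorphic_countable_on_connected_imp_constant[OF hol open_ball connected_ball]
          that by blast
    qed
    have "h (X + t1 *s Y) \<in> clattice b" using C in_T by blast
    then show "ball t0 \<rho> \<subseteq> T"
      using in_T const by (metis subsetI vec_eq_iff)
  qed
qed

lemma ctorus_holomorphic_unique:
  assumes "ctorus_holomorphic b P" "ctorus_holomorphic b Q"
    and real: "\<And>x. clat_eq b (P (embC x)) (Q (embC x))"
  shows "clat_eq b (P z) (Q z)"
proof -
  define X Y where "X = embC (vec_Re z)" and "Y = embC (vec_Im z)"
  have "X + of_real r *s Y = embC (vec_Re z + r *\<^sub>R vec_Im z)" for r
    by (simp add: X_def Y_def embC_def vector_scalar_mult_def vec_eq_iff)
  then have "of_real r \<in> {t. P (X + t *s Y) - Q (X + t *s Y) \<in> clattice b}" for r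
    using real unfolding clat_eq_def by simp
  with ctorus_holomorphic_spreads_locally[OF ctorus_holomorphic_diff[OF assms(1,2)]]
  have "\<i> \<in> {t. P (X + t *s Y) - Q (X + t *s Y) \<in> clattice b}"
    using spreads_locally_eq_UNIV by blast
  moreover have "X + \<i> *s Y = z"
    by (simp add: X_def Y_def embC_def vec_Re_def vec_Im_def vector_scalar_mult_def vec_eq_iff
        complex_eq_iff)
  ultimately show ?thesis unfolding clat_eq_def by simp
qed

lemma ctorus_holo_action_unique:
  assumes "ctorus_holo_action b G \<psi>" "equivariant_incl b G \<phi> \<psi>"
    and "ctorus_holo_action b G \<psi>'" "equivariant_incl b G \<phi> \<psi>'" and "g \<in> carrier G"
  shows "clat_eq b (\<psi>' g z) (\<psi> g z)"
proof (rule ctorus_holomorphic_unique[where P = "\<psi>' g" and Q = "\<psi> g"])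
  show "ctorus_holomorphic b (\<psi>' g)" "ctorus_holomorphic b (\<psi> g)"
    using assms unfolding ctorus_holo_action_def by blast+
  show "clat_eq b (\<psi>' g (embC x)) (\<psi> g (embC x))" for x
    using assms(2,4,5) clat_eq_trans[OF _ clat_eq_sym] unfolding equivariant_incl_def by blast
qed

theorem proposition1p21:
  fixes b :: "'n::finite \<Rightarrow> real^'n"
    and G :: "('g, 'z) monoid_scheme"
    and \<phi> :: "'g \<Rightarrow> real^'n \<Rightarrow> real^'n"
  assumes "lattice_basis b"
    and "group G" and "finite (carrier G)"
    and "quot_action (lat_eq b) G \<phi>"
    and "free_quot_action (lat_eq b) G \<phi>"
    and "\<forall>g\<in>carrier G. torus_isometry b (\<phi> g)"
  shows "\<exists>\<psi>. ctorus_holo_action b G \<psi> \<and> equivariant_incl b G \<phi> \<psi>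
           \<and> (\<forall>\<psi>'. ctorus_holo_action b G \<psi>' \<and> equivariant_incl b G \<phi> \<psi>'
                  \<longrightarrow> (\<forall>g\<in>carrier G. \<forall>z. clat_eq b (\<psi>' g z) (\<psi> g z)))
           \<and> (\<forall>g\<in>carrier G. ctorus_algebraic b (\<psi> g))"
proof -
  have "\<forall>g\<in>carrier G. \<exists>A c. affine_lift b (\<phi> g) A c"
    using torus_isometry_affine_lift[OF assms(1)] assms(6) by blast
  then obtain A c where lift: "\<And>g. g \<in> carrier G \<Longrightarrow> affine_lift b (\<phi> g) (A g) (c g)"
    by metis
  define \<psi> where "\<psi> g = caffine (A g) (c g)" for g
  have action: "ctorus_holo_action b G \<psi>"
    unfolding ctorus_holo_action_def \<psi>_def
  proof
    show "quot_action (clat_eq b) G (\<lambda>g. caffine (A g) (c g))"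
      by (rule caffine_quot_action[OF assms(1) group.is_monoid[OF assms(2)] assms(4) lift])
    show "\<forall>g\<in>carrier G. ctorus_holomorphic b (caffine (A g) (c g))"
      using lift by (simp add: ctorus_holomorphic_caffine affine_lift_def)
  qed
  moreover have equivariant: "equivariant_incl b G \<phi> \<psi>"
    using lift unfolding equivariant_incl_def \<psi>_def by (simp add: affine_lift_equivariant)
  moreover have "ctorus_algebraic b (\<psi> g)" if "g \<in> carrier G" for g
    using lift[OF that] unfolding affine_lift_def \<psi>_def by (simp add: caffine_algebraic[OF assms(1)])
  ultimately show ?thesis
    using ctorus_holo_action_unique[OF action equivariant] by blast
qed

end
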